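(* Let $G$ be a finite group and $\mathcal{O}$ a conjugacy class of involutions of $G$. Then $\mathcal{O}$ is of type D if and only if there exist $r,s\in\mathcal{O}$ such that the order of $rs$ is even and at least $6$.
   Context: A conjugacy class $\mathcal{O}$ of a group (regarded as a rack with $x\triangleright y=xyx^{-1}$) is of type D iff there exist $r,s\in\mathcal{O}$ with $(rs)^2\neq(sr)^2$ such that $r$ and $s$ are not conjugate in the subgroup $\langle r,s\rangle$. (In rack terms: a rack is of type D if it contains a subrack that is a disjoint union $R\sqcup S$ of two subracks with $r\triangleright(s\triangleright(r\triangleright s))\neq s$ for some $r\in R$, $s\in S$.) *)

theory Defs
  imports "HOL-Algebra.Algebra"
begin

definition conj_class :: "('a, 'b) monoid_scheme \<Rightarrow> 'a \<Rightarrow> 'a set" where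
  "conj_class G x = {g \<otimes>\<^bsub>G\<^esub> x \<otimes>\<^bsub>G\<^esub> inv\<^bsub>G\<^esub> g | g. g \<in> carrier G}"

definition involution :: "('a, 'b) monoid_scheme \<Rightarrow> 'a \<Rightarrow> bool" where
  "involution G x \<longleftrightarrow> x \<in> carrier G \<and> x \<noteq> \<one>\<^bsub>G\<^esub> \<and> x \<otimes>\<^bsub>G\<^esub> x = \<one>\<^bsub>G\<^esub>"

definition type_D :: "('a, 'b) monoid_scheme \<Rightarrow> 'a set \<Rightarrow> bool" where
  "type_D G C \<longleftrightarrow> (\<exists>r\<in>C. \<exists>s\<in>C.
      (r \<otimes>\<^bsub>G\<^esub> s) [^]\<^bsub>G\<^esub> (2::nat) \<noteq> (s \<otimes>\<^bsub>G\<^esub> r) [^]\<^bsub>G\<^esub> (2::nat) \<and>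
      \<not> (\<exists>h\<in>generate G {r, s}. h \<otimes>\<^bsub>G\<^esub> r \<otimes>\<^bsub>G\<^esub> inv\<^bsub>G\<^esub> h = s))"

end

theory Submission
  imports Defs
begin

text \<open>For involutions r and s put t = rs. Conjugation by r inverts t, so the group
  generated by r and s is dihedral: it consists of rotations t^i and reflections t^i r, with
  s = t^(-1) r. Hence (rs)^2 = (sr)^2 = t^(-2) exactly when the order of t divides 4.
  Conjugation by t^k sends t^i r to t^(i+2k) r, so if t has odd order 2k+1 the rotation t^k
  conjugates r to s. If t has even order, the reflections t^(2j) r form a set stable under
  conjugation by r and s, hence by the whole generated group; it contains r but not s.\<close>

lemma (in group) conj_int_pow:
  assumes "g \<in> carrier G" and "y \<in> carrier G"
  shows "g \<otimes> y [^] (i::int) \<otimes> inv g = (g \<otimes> y \<otimes> inv g) [^] i"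
proof -
  have "(\<lambda>y. g \<otimes> y \<otimes> inv g) \<in> hom G G"
    using assms(1) by (intro homI) (simp_all add: m_assoc inv_solve_left inv_solve_left')
  from hom_int_pow[OF this assms(2) is_group is_group] show ?thesis .
qed

lemma (in group) generate_conj_closed:
  assumes "A \<subseteq> carrier G" and "C \<subseteq> carrier G"
    and conj: "\<And>a c. a \<in> A \<Longrightarrow> c \<in> C \<Longrightarrow> a \<otimes> c \<otimes> inv a \<in> C"
    and conj_inv: "\<And>a c. a \<in> A \<Longrightarrow> c \<in> C \<Longrightarrow> inv a \<otimes> c \<otimes> a \<in> C"
    and "h \<in> generate G A" and "c \<in> C"
  shows "h \<otimes> c \<otimes> inv h \<in> C"
  using assms(5,6)
proof (induction arbitrary: c rule: generate.induct)
  case one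
  then show ?case using assms(2) by auto
next
  case (incl a)
  then show ?case by (rule conj)
next
  case (inv a)
  then show ?case using conj_inv assms(1) by auto
next
  case (eng h1 h2)
  have "h1 \<in> carrier G" "h2 \<in> carrier G" "c \<in> carrier G"
    using eng.hyps eng.prems assms(1,2) generate_in_carrier by auto
  then have "h1 \<otimes> h2 \<otimes> c \<otimes> inv (h1 \<otimes> h2) = h1 \<otimes> (h2 \<otimes> c \<otimes> inv h2) \<otimes> inv h1"
    by (simp add: inv_mult_group m_assoc)
  then show ?case using eng.IH eng.prems by simp
qed

lemma even_not_dvd_4_iff:
  fixes n :: nat
  assumes "0 < n"
  shows "even n \<and> \<not> n dvd 4 \<longleftrightarrow> even n \<and> 6 \<le> n"
proof
  assume *: "even n \<and> \<not> n dvd 4"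
  then have "n \<noteq> 2" "n \<noteq> 4" by auto
  with * assms show "even n \<and> 6 \<le> n" by (auto elim!: evenE)
next
  assume "even n \<and> 6 \<le> n"
  then show "even n \<and> \<not> n dvd 4" using dvd_imp_le[of n 4] by auto
qed

lemma conj_class_involution:
  assumes "group G" and "involution G x" and "r \<in> conj_class G x"
  shows "involution G r"
proof -
  interpret group G by fact
  obtain g where g: "g \<in> carrier G" and r: "r = g \<otimes>\<^bsub>G\<^esub> x \<otimes>\<^bsub>G\<^esub> inv\<^bsub>G\<^esub> g"
    using assms(3) unfolding conj_class_def by auto
  have x: "x \<in> carrier G" "x \<noteq> \<one>\<^bsub>G\<^esub>" "x \<otimes>\<^bsub>G\<^esub> x = \<one>\<^bsub>G\<^esub>"
    using assms(2) unfolding involution_def by auto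
  have "r \<otimes>\<^bsub>G\<^esub> r = g \<otimes>\<^bsub>G\<^esub> (x \<otimes>\<^bsub>G\<^esub> x) \<otimes>\<^bsub>G\<^esub> inv\<^bsub>G\<^esub> g"
    using g x(1) by (simp add: r m_assoc inv_solve_left inv_solve_left')
  moreover have "r \<noteq> \<one>\<^bsub>G\<^esub>"
    using g x by (simp add: r inv_solve_right')
  ultimately show ?thesis using g x unfolding involution_def by (simp add: r)
qed

locale dihedral_pair = group +
  fixes r s
  assumes r_carrier [simp]: "r \<in> carrier G" and s_carrier [simp]: "s \<in> carrier G"
    and r_square [simp]: "r \<otimes> r = \<one>" and s_square [simp]: "s \<otimes> s = \<one>"
begin

abbreviation t where "t \<equiv> r \<otimes> s"

lemma inv_r [simp]: "inv r = r" and inv_s [simp]: "inv s = s"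
  by (simp_all add: inv_equality)

lemma r_mult_r_mult [simp]: "x \<in> carrier G \<Longrightarrow> r \<otimes> (r \<otimes> x) = x"
  by (simp flip: m_assoc)

lemma sr_eq_inv_t: "s \<otimes> r = inv t"
  by (simp add: inv_mult_group)

lemma r_mult_t_pow: "r \<otimes> t [^] (i::int) = t [^] (- i) \<otimes> r"
proof -
  have "r \<otimes> t \<otimes> inv r = inv t"
    by (simp add: sr_eq_inv_t flip: m_assoc)
  then have "r \<otimes> t [^] i \<otimes> r = t [^] (- i)"
    using conj_int_pow[of r t i] by (simp add: int_pow_inv int_pow_neg)
  then have "r \<otimes> t [^] i \<otimes> r \<otimes> r = t [^] (- i) \<otimes> r" by simp
  then show ?thesis by (simp add: m_assoc)
qed

lemma s_eq_reflection: "s = t [^] (-1::int) \<otimes> r"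
proof -
  have "s = r \<otimes> t [^] (1::int)" by (simp flip: m_assoc)
  then show ?thesis by (simp only: r_mult_t_pow)
qed

lemma conj_r_reflection: "r \<otimes> (t [^] (i::int) \<otimes> r) \<otimes> inv r = t [^] (- i) \<otimes> r"
  by (simp add: m_assoc r_mult_t_pow)

lemma conj_rotation_reflection:
  "t [^] (k::int) \<otimes> (t [^] (i::int) \<otimes> r) \<otimes> inv (t [^] k) = t [^] (i + 2 * k) \<otimes> r"
proof -
  have "t [^] k \<otimes> (t [^] i \<otimes> r) \<otimes> inv (t [^] k) = t [^] k \<otimes> t [^] i \<otimes> (r \<otimes> t [^] (- k))"
    by (simp add: m_assoc int_pow_neg)
  also have "\<dots> = t [^] k \<otimes> t [^] i \<otimes> t [^] k \<otimes> r"
    by (simp add: r_mult_t_pow m_assoc)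
  also have "t [^] k \<otimes> t [^] i \<otimes> t [^] k = t [^] (k + i + k)"
    by (metis int_pow_mult m_closed r_carrier s_carrier)
  also have "k + i + k = i + 2 * k" by simp
  finally show ?thesis .
qed

lemma conj_s_reflection: "s \<otimes> (t [^] (i::int) \<otimes> r) \<otimes> inv s = t [^] (- i - 2) \<otimes> r"
proof -
  have "s \<otimes> (t [^] i \<otimes> r) \<otimes> inv s
      = t [^] (-1::int) \<otimes> r \<otimes> (t [^] i \<otimes> r) \<otimes> inv (t [^] (-1::int) \<otimes> r)"
    by (simp only: s_eq_reflection[symmetric])
  also have "\<dots> = t [^] (-1::int) \<otimes> (r \<otimes> (t [^] i \<otimes> r) \<otimes> inv r) \<otimes> inv (t [^] (-1::int))"
    by (simp add: inv_mult_group m_assoc)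
  also have "r \<otimes> (t [^] i \<otimes> r) \<otimes> inv r = t [^] (- i) \<otimes> r"
    by (rule conj_r_reflection)
  also have "t [^] (-1::int) \<otimes> (t [^] (- i) \<otimes> r) \<otimes> inv (t [^] (-1::int)) = t [^] (- i + 2 * -1) \<otimes> r"
    by (rule conj_rotation_reflection)
  finally show ?thesis by simp
qed

lemma squares_differ_iff: "t [^] (2::nat) \<noteq> (s \<otimes> r) [^] (2::nat) \<longleftrightarrow> \<not> ord t dvd 4"
proof -
  let ?u = "t [^] (2::nat)"
  have "(s \<otimes> r) [^] (2::nat) = inv ?u" by (simp add: sr_eq_inv_t nat_pow_inv)
  moreover have "?u = inv ?u \<longleftrightarrow> ?u \<otimes> ?u = \<one>"
    by (metis nat_pow_closed m_closed r_carrier s_carrier inv_equality r_inv)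
  moreover have "?u \<otimes> ?u = t [^] (4::nat)" by (simp add: nat_pow_mult)
  ultimately show ?thesis using pow_eq_id[of t 4] by auto
qed

lemma conjugate_in_generate_if_odd_ord:
  assumes "odd (ord t)"
  shows "\<exists>h\<in>generate G {r, s}. h \<otimes> r \<otimes> inv h = s"
proof -
  obtain k where k: "ord t = 2 * k + 1" using assms oddE by blast
  have "t [^] int k \<in> generate G {r, s}"
    by (intro subgroup_int_pow_closed generate_is_subgroup generate.eng generate.incl) auto
  moreover have "t [^] int k \<otimes> r \<otimes> inv (t [^] int k) = s"
  proof -
    have "t [^] int k \<otimes> r \<otimes> inv (t [^] int k) = t [^] (2 * int k) \<otimes> r"
      using conj_rotation_reflection[of "int k" 0] by simp
    also have "t [^] (2 * int k) = t [^] (-1::int)"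
    proof -
      have "- 1 - 2 * int k = - int (ord t)" using k by simp
      then show ?thesis by (simp add: int_pow_eq)
    qed
    finally show ?thesis by (simp only: s_eq_reflection[symmetric])
  qed
  ultimately show ?thesis by blast
qed

lemma not_conjugate_in_generate_if_even_ord:
  assumes "even (ord t)"
  shows "\<not> (\<exists>h\<in>generate G {r, s}. h \<otimes> r \<otimes> inv h = s)"
proof
  define C where "C = {t [^] (2 * j) \<otimes> r | j::int. True}"
  have C_carrier: "C \<subseteq> carrier G" unfolding C_def by auto
  have "r \<otimes> c \<otimes> inv r \<in> C" "s \<otimes> c \<otimes> inv s \<in> C" if "c \<in> C" for c
  proof -
    obtain j :: int where c: "c = t [^] (2 * j) \<otimes> r" using \<open>c \<in> C\<close> C_def by auto
    have "r \<otimes> c \<otimes> inv r = t [^] (2 * (- j)) \<otimes> r"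
      using conj_r_reflection[of "2 * j"] by (simp add: c)
    moreover have "s \<otimes> c \<otimes> inv s = t [^] (2 * (- j - 1)) \<otimes> r"
      using conj_s_reflection[of "2 * j"] by (simp add: c algebra_simps)
    ultimately show "r \<otimes> c \<otimes> inv r \<in> C" "s \<otimes> c \<otimes> inv s \<in> C" unfolding C_def by blast+
  qed
  then have stable: "h \<otimes> c \<otimes> inv h \<in> C" if "h \<in> generate G {r, s}" "c \<in> C" for h c
    by (intro generate_conj_closed[OF _ C_carrier _ _ that]) auto
  assume "\<exists>h\<in>generate G {r, s}. h \<otimes> r \<otimes> inv h = s"
  moreover have "r \<in> C" unfolding C_def by (auto intro!: exI[of _ 0])
  ultimately have "s \<in> C" using stable by blast
  then obtain j :: int where "s = t [^] (2 * j) \<otimes> r"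
    unfolding C_def by blast
  then have "t [^] (2 * j) \<otimes> r = t [^] (-1::int) \<otimes> r"
    using s_eq_reflection by (rule trans[OF sym])
  then have "t [^] (2 * j) = t [^] (-1::int)"
    by simp
  then have "int (ord t) dvd - 1 - 2 * j" by (simp add: int_pow_eq)
  moreover have "even (int (ord t))" using assms by simp
  ultimately have "even (- 1 - 2 * j)" using dvd_trans by blast
  then show False by simp
qed

lemma conjugate_in_generate_iff_odd_ord:
  "(\<exists>h\<in>generate G {r, s}. h \<otimes> r \<otimes> inv h = s) \<longleftrightarrow> odd (ord t)"
  using conjugate_in_generate_if_odd_ord not_conjugate_in_generate_if_even_ord by blast

lemma type_D_pair_iff:
  assumes "finite (carrier G)"
  shows "(t [^] (2::nat) \<noteq> (s \<otimes> r) [^] (2::nat) \<and>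
      \<not> (\<exists>h\<in>generate G {r, s}. h \<otimes> r \<otimes> inv h = s)) \<longleftrightarrow> even (ord t) \<and> 6 \<le> ord t"
proof -
  have "0 < ord t" using ord_ge_1[OF assms, of t] by simp
  then show ?thesis
    using squares_differ_iff conjugate_in_generate_iff_odd_ord even_not_dvd_4_iff by blast
qed

end

theorem lemma2p6:
  fixes G (structure) and x :: 'a
  assumes "group G" and "finite (carrier G)"
    and "x \<in> carrier G" and "involution G x"
  shows "type_D G (conj_class G x) \<longleftrightarrow>
    (\<exists>r\<in>conj_class G x. \<exists>s\<in>conj_class G x.
       even (group.ord G (r \<otimes> s)) \<and> group.ord G (r \<otimes> s) \<ge> 6)"
proof -
  have "dihedral_pair G r s" if "r \<in> conj_class G x" and "s \<in> conj_class G x" for r s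
    using that conj_class_involution[OF assms(1,4)] assms(1)
    unfolding dihedral_pair_def dihedral_pair_axioms_def involution_def by blast
  then show ?thesis
    unfolding type_D_def using dihedral_pair.type_D_pair_iff[OF _ assms(2)] by blast
qed

end
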